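(* Let $A$ be a finite alphabet, $u,v\in A^*$, $n\in\mathbb{N}$, and $B,C\subseteq A$ subalphabets. If $uB^*C^*B^*v\subseteq[uv]_n$, then $u(B\cup C)^*v\subseteq[uv]_n$.
   Context: $u\sim_n v$ iff $u,v$ have exactly the same (scattered) subwords of length at most $n$; $[w]_n$ denotes the $\sim_n$-equivalence class of $w$. *)

theory Defs
  imports Main "HOL-Library.Sublist"
begin

definition simeq :: "nat \<Rightarrow> 'a list \<Rightarrow> 'a list \<Rightarrow> bool" where
  "simeq n u v \<longleftrightarrow> (\<forall>w. length w \<le> n \<longrightarrow> (subseq w u \<longleftrightarrow> subseq w v))"

definition simclass :: "nat \<Rightarrow> 'a list \<Rightarrow> 'a list set" where
  "simclass n w = {x. simeq n x w}"

end

theory Submission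
  imports Defs
begin

text \<open>Let \<open>w \<in> G\<^sup>*\<close> and let \<open>s\<close>, \<open>|s| \<le> n\<close>, embed in \<open>u w v\<close> but not in \<open>u v\<close>. Let \<open>p\<close> be
the length of the longest prefix of \<open>s\<close> embedding in \<open>u\<close> and \<open>d\<close> the start of the longest
suffix embedding in \<open>v\<close>. Then \<open>p < d\<close>, and the letters \<open>a = s ! p\<close>, \<open>c = s ! (d - 1)\<close> come
from \<open>w\<close>. If \<open>d = p + 1\<close>, then \<open>s\<close> embeds in \<open>u a v\<close>; otherwise the word
\<open>take p s @ [a, c] @ drop d s\<close>, of length at most \<open>n\<close>, embeds in \<open>u a c v\<close> but not in \<open>u v\<close>,
since an embedding into \<open>u v\<close> would lengthen the prefix or the suffix. So if inserting words
of length at most 2 over \<open>G\<close> between \<open>u\<close> and \<open>v\<close> preserves \<open>\<sim>\<^sub>n\<close>, so does inserting any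
word over \<open>G\<close>; and every word of length at most 2 over \<open>B \<union> C\<close> lies in \<open>B\<^sup>* C\<^sup>* B\<^sup>*\<close>.\<close>

lemma subseq_insert_middle: "subseq (u @ v) (u @ w @ v)"
  by (simp add: subseq_append' subseq_drop_many)

lemma lists_Un_length_le_2_decomp:
  assumes "t \<in> lists (B \<union> C)" and "length t \<le> 2"
  obtains x y z where "t = x @ y @ z" "x \<in> lists B" "y \<in> lists C" "z \<in> lists B"
proof -
  consider "t = []" | p where "t = [p]" | p q where "t = [p, q]"
    using assms(2) by (cases t; cases "tl t") auto
  then show thesis
  proof cases
    case 1
    with that[of "[]" "[]" "[]"] show ?thesis
      by simp
  next
    case (2 p)
    with assms(1) that[of "[]" "[p]" "[]"] that[of "[p]" "[]" "[]"] show ?thesis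
      by auto
  next
    case (3 p q)
    with assms(1) that[of "[p, q]" "[]" "[]"] that[of "[p]" "[q]" "[]"]
      that[of "[]" "[p]" "[q]"] that[of "[]" "[p, q]" "[]"] show ?thesis
      by auto
  qed
qed

lemma subseq_bridge_extends_prefix_or_suffix:
  assumes "subseq (take p s @ [s ! p, s ! (d - 1)] @ drop d s) (u @ v)" and "p < d" and "d \<le> length s"
  shows "subseq (take (Suc p) s) u \<or> subseq (drop (d - 1) s) v"
proof -
  let ?x = "take p s @ [s ! p, s ! (d - 1)] @ drop d s"
  obtain x1 x2 where x: "?x = x1 @ x2" "subseq x1 u" "subseq x2 v"
    using assms(1) by (rule subseq_appendE)
  show ?thesis
  proof (cases "p < length x1")
    case True
    have "take (Suc p) s = take (Suc p) ?x"
      using assms(2,3) by (simp add: take_Suc_conv_app_nth)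
    also have "\<dots> = take (Suc p) x1"
      using True x(1) by simp
    finally show ?thesis
      using x(2) by (metis take_is_prefix prefix_imp_subseq subseq_order.trans)
  next
    case False
    have "drop (d - 1) s = drop (Suc p) ?x"
      using Cons_nth_drop_Suc[of "d - 1" s] assms(2,3) by simp
    also have "\<dots> = drop (Suc p - length x1) x2"
      using False x(1) by simp
    finally show ?thesis
      using x(3) by (metis suffix_drop suffix_imp_subseq subseq_order.trans)
  qed
qed

lemma subseq_insert_from_short_inserts:
  assumes short: "\<And>t x. t \<in> lists G \<Longrightarrow> length t \<le> 2 \<Longrightarrow> length x \<le> n
      \<Longrightarrow> subseq x (u @ t @ v) \<Longrightarrow> subseq x (u @ v)"
    and "w \<in> lists G" and "subseq s (u @ w @ v)" and "length s \<le> n"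
  shows "subseq s (u @ v)"
proof (rule ccontr)
  assume not_uv: "\<not> subseq s (u @ v)"
  obtain s1 s2 s3 where s: "s = s1 @ s2 @ s3" "subseq s1 u" "subseq s2 w" "subseq s3 v"
    using \<open>subseq s (u @ w @ v)\<close> by (metis subseq_appendE)
  define p where "p = (GREATEST k. k \<le> length s \<and> subseq (take k s) u)"
  define d where "d = (LEAST k. subseq (drop k s) v)"
  have p: "subseq (take p s) u" "length s1 \<le> p"
    and p_max: "\<And>k. k \<le> length s \<Longrightarrow> subseq (take k s) u \<Longrightarrow> k \<le> p"
    using GreatestI_nat[of "\<lambda>k. k \<le> length s \<and> subseq (take k s) u" "length s1" "length s"]
      Greatest_le_nat[of "\<lambda>k. k \<le> length s \<and> subseq (take k s) u" _ "length s"] s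
    unfolding p_def by auto
  have d: "subseq (drop d s) v" "d \<le> length (s1 @ s2)"
    and d_min: "\<And>k. subseq (drop k s) v \<Longrightarrow> d \<le> k"
    using LeastI[of "\<lambda>k. subseq (drop k s) v" "length (s1 @ s2)"]
      Least_le[of "\<lambda>k. subseq (drop k s) v"] s
    unfolding d_def by auto
  have "d \<le> length s"
    using d(2) s(1) by simp
  have "p < d"
  proof (rule ccontr)
    assume "\<not> p < d"
    then have "drop p s = drop (p - d) (drop d s)"
      by simp
    then have "subseq (drop p s) v"
      using d(1) by (metis suffix_drop suffix_imp_subseq subseq_order.trans)
    then have "subseq (take p s @ drop p s) (u @ v)"
      using p(1) by (rule list_emb_append_mono[rotated])
    with not_uv show False
      by simp
  qed
  have in_G: "s ! i \<in> G" if "length s1 \<le> i" "i < length (s1 @ s2)" for i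
  proof -
    have "s ! i \<in> set s2"
      using that s(1) by (auto simp: nth_append)
    then have "s ! i \<in> set w"
      using s(3) by (auto elim: list_emb_set)
    then show ?thesis
      using \<open>w \<in> lists G\<close> by auto
  qed
  show False
  proof (cases "Suc p = d")
    case True
    have "s = take p s @ [s ! p] @ drop d s"
      using True id_take_nth_drop[of p s] \<open>p < d\<close> \<open>d \<le> length s\<close> by simp
    then have "subseq s (u @ [s ! p] @ v)"
      using p(1) d(1) by (metis list_emb_append_mono subseq_order.refl)
    then have "subseq s (u @ v)"
      using short[of "[s ! p]" s] in_G[of p] p(2) \<open>p < d\<close> d(2) \<open>length s \<le> n\<close> by simp
    with not_uv show False ..
  next
    case False
    define x where "x = take p s @ [s ! p, s ! (d - 1)] @ drop d s"
    have "subseq x (u @ [s ! p, s ! (d - 1)] @ v)"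
      unfolding x_def using p(1) d(1) by (metis list_emb_append_mono subseq_order.refl)
    moreover have "length x \<le> n"
      unfolding x_def using False \<open>p < d\<close> \<open>d \<le> length s\<close> \<open>length s \<le> n\<close> by simp
    ultimately have "subseq x (u @ v)"
      using short[of "[s ! p, s ! (d - 1)]" x] in_G[of p] in_G[of "d - 1"] p(2) \<open>p < d\<close> d(2)
      by simp
    then have "subseq (take (Suc p) s) u \<or> subseq (drop (d - 1) s) v"
      unfolding x_def using \<open>p < d\<close> \<open>d \<le> length s\<close> by (rule subseq_bridge_extends_prefix_or_suffix)
    then show False
      using p_max[of "Suc p"] d_min[of "d - 1"] \<open>p < d\<close> \<open>d \<le> length s\<close> by auto
  qed
qed

lemma simeq_insert_from_short_inserts:
  assumes "\<And>t. t \<in> lists G \<Longrightarrow> length t \<le> 2 \<Longrightarrow> simeq n (u @ t @ v) (u @ v)"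
    and "w \<in> lists G"
  shows "simeq n (u @ w @ v) (u @ v)"
  unfolding simeq_def
proof (intro allI impI iffI)
  fix s :: "'a list"
  assume "subseq s (u @ w @ v)" "length s \<le> n"
  with assms(2) show "subseq s (u @ v)"
  proof (rule subseq_insert_from_short_inserts[rotated])
    fix t x :: "'a list"
    assume "t \<in> lists G" "length t \<le> 2" "length x \<le> n" "subseq x (u @ t @ v)"
    with assms(1) show "subseq x (u @ v)"
      unfolding simeq_def by blast
  qed
next
  fix s :: "'a list"
  assume "subseq s (u @ v)"
  then show "subseq s (u @ w @ v)"
    using subseq_insert_middle subseq_order.trans by blast
qed

theorem lemma16:
  fixes A B C :: "'a set" and u v :: "'a list" and n :: nat
  assumes "finite A"
    and "u \<in> lists A" and "v \<in> lists A"
    and "B \<subseteq> A" and "C \<subseteq> A"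
    and "{u @ x @ y @ z @ v | x y z. x \<in> lists B \<and> y \<in> lists C \<and> z \<in> lists B}
           \<subseteq> simclass n (u @ v)"
  shows "{u @ w @ v | w. w \<in> lists (B \<union> C)} \<subseteq> simclass n (u @ v)"
proof -
  have "simeq n (u @ t @ v) (u @ v)" if t: "t \<in> lists (B \<union> C)" "length t \<le> 2" for t
  proof -
    obtain x y z where "t = x @ y @ z" "x \<in> lists B" "y \<in> lists C" "z \<in> lists B"
      using t by (rule lists_Un_length_le_2_decomp)
    then have "u @ t @ v \<in> simclass n (u @ v)"
      using assms(6) by auto
    then show ?thesis
      by (simp add: simclass_def)
  qed
  then have "simeq n (u @ w @ v) (u @ v)" if "w \<in> lists (B \<union> C)" for w
    using that by (rule simeq_insert_from_short_inserts)
  then show ?thesis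
    by (auto simp: simclass_def)
qed

end
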